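(* For every $\mathcal S\in\mathrm{TP}(n)$, the polyhedral cone in $\mathbb{R}^{\binom{[n]}{2}}$ defined by the system $F_{\mathcal S}$ is exactly $K_{\mathcal S}=\mathbb{R}(1,\dots,1)^T+\mathrm{cone}\{-v_C: C\in\mathcal S^\circ\}$.
   Context: A rooted tree on leaf set $[n]$ has leaves labeled bijectively by $[n]$ and internal vertices each with at least two children; a clade is the set of leaves below an internal vertex, and $\mathrm{clade}(T)$ is the set of clades (including $[n]$). $\mathrm{TP}(n)$ is the collection of sets $\mathcal S=\mathrm{clade}(T_1)\cup\mathrm{clade}(T_2)$ for rooted trees $T_1,T_2$ on leaf set $[n]$; $\mathcal S^\circ=\mathcal S\setminus\{[n]\}$. For $C\subseteq[n]$, $v_C\in\mathbb{R}^{\binom{[n]}{2}}$ is the characteristic vector of $\binom{C}{2}$. The clade intersection poset $\mathrm{cip}(\mathcal S)$ consists of $\mathcal S$ together with all intersections of elements of $\mathcal S$ having at least two elements, ordered by inclusion; $\mathrm{cip}(\mathcal S)^\circ=\mathrm{cip}(\mathcal S)\setminus\{[n]\}$. It is a join-semilattice; $A\vee B$ denotes the join (least element containing both). For a pair $i\ne j$, $\overline{ij}$ is the smallest element of $\mathrm{cip}(\mathcal S)$ containing $\{i,j\}$; every $C\in\mathrm{cip}(\mathcal S)$ equals $\overline{ij}$ for some pair, and for each $C$ we write $\delta_C:=\delta_{ij}$ for a fixed such pair $ij$. For $C\in\mathrm{cip}(\mathcal S)^\circ$, its parents $D_1,\dots,D_r$ are the elements of $\mathrm{cip}(\mathcal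 S)$ covering $C$; set $D_\emptyset=C$ and $D_I=\bigvee_{i\in I}D_i$ for nonempty $I\subseteq[r]$. The system $F_{\mathcal S}$ on $\delta\in\mathbb{R}^{\binom{[n]}{2}}$ consists of: (a) $\delta_{ij}=\delta_{kl}$ whenever $\overline{ij}=\overline{kl}$; (b) for each $C\in\mathcal S^\circ$ with parents $D_1,\dots,D_r$, the inequality $\sum_{I\subseteq[r]}(-1)^{|I|}\delta_{D_I}\le 0$; (c) for each $C\in\mathrm{cip}(\mathcal S)\setminus\mathcal S$ with parents $D_1,\dots,D_r$, the equation $\sum_{I\subseteq[r]}(-1)^{|I|}\delta_{D_I}=0$. *)

theory Defs
  imports Complex_Main
begin

text \<open>A rooted tree: leaves carry labels; an internal vertex is a node with a list of
  children (the order of the list is irrelevant).\<close>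
datatype ltree = Leaf nat | Node "ltree list"

fun leaves :: "ltree \<Rightarrow> nat set" where
  "leaves (Leaf i) = {i}"
| "leaves (Node ts) = (\<Union>t\<in>set ts. leaves t)"

fun wf_tree :: "ltree \<Rightarrow> bool" where
  "wf_tree (Leaf i) = True"
| "wf_tree (Node ts) = (2 \<le> length ts \<and> (\<forall>t\<in>set ts. wf_tree t) \<and>
      (\<forall>i<length ts. \<forall>j<length ts. i \<noteq> j \<longrightarrow> leaves (ts ! i) \<inter> leaves (ts ! j) = {}))"

fun clades :: "ltree \<Rightarrow> nat set set" where
  "clades (Leaf i) = {}"
| "clades (Node ts) = insert (leaves (Node ts)) (\<Union>t\<in>set ts. clades t)"

definition rooted_tree_on :: "nat \<Rightarrow> ltree \<Rightarrow> bool" where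
  "rooted_tree_on n T \<longleftrightarrow> wf_tree T \<and> leaves T = {1..n}"

definition TP :: "nat \<Rightarrow> nat set set set" where
  "TP n = {clades T1 \<union> clades T2 | T1 T2. rooted_tree_on n T1 \<and> rooted_tree_on n T2}"

definition cip :: "nat set set \<Rightarrow> nat set set" where
  "cip S = S \<union> {\<Inter>F | F. F \<subseteq> S \<and> F \<noteq> {} \<and> 2 \<le> card (\<Inter>F)}"

definition least_above :: "nat set set \<Rightarrow> nat set \<Rightarrow> nat set" where
  "least_above P A = (THE C. C \<in> P \<and> A \<subseteq> C \<and> (\<forall>C'\<in>P. A \<subseteq> C' \<longrightarrow> C \<subseteq> C'))"

definition join_cip :: "nat set set \<Rightarrow> nat set set \<Rightarrow> nat set" where
  "join_cip P X = least_above P (\<Union>X)"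

definition parents :: "nat set set \<Rightarrow> nat set \<Rightarrow> nat set set" where
  "parents P C = {D \<in> P. C \<subset> D \<and> \<not> (\<exists>E\<in>P. C \<subset> E \<and> E \<subset> D)}"

definition pairs :: "nat \<Rightarrow> nat set set" where
  "pairs n = {p. p \<subseteq> {1..n} \<and> card p = 2}"

text \<open>The space \<open>\<real>^(binom [n] 2)\<close>: functions on sets vanishing outside 2-subsets of [n].\<close>
definition pair_space :: "nat \<Rightarrow> (nat set \<Rightarrow> real) set" where
  "pair_space n = {\<delta>. \<forall>p. p \<notin> pairs n \<longrightarrow> \<delta> p = 0}"

definition pair_closure :: "nat set set \<Rightarrow> nat set \<Rightarrow> nat set" where
  "pair_closure S p = least_above (cip S) p"

definition delta_of :: "nat \<Rightarrow> nat set set \<Rightarrow> (nat set \<Rightarrow> real) \<Rightarrow> nat set \<Rightarrow> real" where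
  "delta_of n S \<delta> C = \<delta> (SOME p. p \<in> pairs n \<and> pair_closure S p = C)"

definition D_of :: "nat set set \<Rightarrow> nat set \<Rightarrow> nat set set \<Rightarrow> nat set" where
  "D_of S C I = (if I = {} then C else join_cip (cip S) I)"

definition incl_excl :: "nat \<Rightarrow> nat set set \<Rightarrow> (nat set \<Rightarrow> real) \<Rightarrow> nat set \<Rightarrow> real" where
  "incl_excl n S \<delta> C =
     (\<Sum>I\<in>Pow (parents (cip S) C). (-1) ^ card I * delta_of n S \<delta> (D_of S C I))"

definition F_cone :: "nat \<Rightarrow> nat set set \<Rightarrow> (nat set \<Rightarrow> real) set" where
  "F_cone n S = {\<delta> \<in> pair_space n.
     (\<forall>p\<in>pairs n. \<forall>q\<in>pairs n. pair_closure S p = pair_closure S q \<longrightarrow> \<delta> p = \<delta> q) \<and>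
     (\<forall>C\<in>S - {{1..n}}. incl_excl n S \<delta> C \<le> 0) \<and>
     (\<forall>C\<in>cip S - S. incl_excl n S \<delta> C = 0)}"

definition v_vec :: "nat \<Rightarrow> nat set \<Rightarrow> nat set \<Rightarrow> real" where
  "v_vec n C = (\<lambda>p. if p \<in> pairs n \<and> p \<subseteq> C then 1 else 0)"

definition ones_vec :: "nat \<Rightarrow> nat set \<Rightarrow> real" where
  "ones_vec n = (\<lambda>p. if p \<in> pairs n then 1 else 0)"

text \<open>\<open>K_S = \<real>(1,\<dots>,1) + cone{-v_C : C \<in> S\<degree>}\<close> (S is finite, so the conical hull is the
  set of nonnegative combinations).\<close>
definition K_cone :: "nat \<Rightarrow> nat set set \<Rightarrow> (nat set \<Rightarrow> real) set" where
  "K_cone n S = {(\<lambda>p. t * ones_vec n p + (\<Sum>C\<in>S - {{1..n}}. c C * (- v_vec n C p))) | t c.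
                  \<forall>C\<in>S - {{1..n}}. 0 \<le> c C}"

end

theory Submission
  imports Defs
begin

text \<open>A vector in either cone depends on a pair only through its closure \<open>overline{ij}\<close>, and as
  \<open>S\<close> is the union of two laminar families, every element of \<open>cip(S)\<close> is the closure of a pair;
  so both cones are really sets of functions on \<open>cip(S)\<close>. The alternating sums over parents in
  \<open>F_S\<close> are Moebius differences on \<open>cip(S)\<close>: a set of parents of \<open>E\<close> has its join below
  \<open>X \<supseteq> E\<close> iff all its members lie below \<open>X\<close>, so the difference of the upper sum
  \<open>E \<mapsto> t + \<Sum>{w X | E \<subseteq> X \<noteq> [n]}\<close> at \<open>E\<close> is \<open>w E\<close>, and every function is the upper sum of
  its own differences. Hence \<open>F_S\<close> says exactly that \<open>\<delta> = t\<one> - \<Sum> c\<^sub>C v\<^sub>C\<close> with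
  \<open>c\<^sub>C \<ge> 0\<close> on \<open>S\<degree>\<close> and no contribution from \<open>cip(S) - S\<close>, which is \<open>K_S\<close>.\<close>

section \<open>Laminar families\<close>

definition laminar :: "'a set set \<Rightarrow> bool" where
  "laminar L \<longleftrightarrow> (\<forall>X\<in>L. \<forall>Y\<in>L. X \<subseteq> Y \<or> Y \<subseteq> X \<or> X \<inter> Y = {})"

definition joined_outside :: "'a set set \<Rightarrow> 'a set \<Rightarrow> 'a \<Rightarrow> 'a \<Rightarrow> bool" where
  "joined_outside L E i j \<longleftrightarrow> (\<exists>X\<in>L. i \<in> X \<and> j \<in> X \<and> \<not> E \<subseteq> X)"

lemma joined_outside_sym: "joined_outside L E i j \<Longrightarrow> joined_outside L E j i"
  unfolding joined_outside_def by blast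

lemma laminar_joined_outside_trans:
  assumes "laminar L" "joined_outside L E i j" "joined_outside L E j k"
  shows "joined_outside L E i k"
proof -
  obtain X where X: "X \<in> L" "i \<in> X" "j \<in> X" "\<not> E \<subseteq> X"
    using assms(2) unfolding joined_outside_def by blast
  obtain Y where Y: "Y \<in> L" "j \<in> Y" "k \<in> Y" "\<not> E \<subseteq> Y"
    using assms(3) unfolding joined_outside_def by blast
  have "X \<subseteq> Y \<or> Y \<subseteq> X"
    using assms(1) X Y unfolding laminar_def by blast
  then show ?thesis
    unfolding joined_outside_def using X Y by blast
qed

text \<open>If \<open>i\<close> were joined to every other point of \<open>E\<close>, then by laminarity the maximal member
  of \<open>L\<close> containing \<open>i\<close> but not \<open>E\<close> would contain all of \<open>E\<close>.\<close>
lemma laminar_unjoined_partner: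
  assumes "finite L" "laminar L" "i \<in> E" "2 \<le> card E"
  shows "\<exists>j\<in>E. j \<noteq> i \<and> \<not> joined_outside L E i j"
proof (rule ccontr)
  assume "\<not> ?thesis"
  then have joined: "\<And>j. j \<in> E \<Longrightarrow> j \<noteq> i \<Longrightarrow> joined_outside L E i j" by blast
  have "\<not> E \<subseteq> {i}"
    using assms(4) card_mono[of "{i}" E] by auto
  then obtain j0 where "j0 \<in> E" "j0 \<noteq> i" by blast
  let ?F = "{X \<in> L. i \<in> X \<and> \<not> E \<subseteq> X}"
  obtain X0 where "X0 \<in> ?F"
    using joined[OF \<open>j0 \<in> E\<close> \<open>j0 \<noteq> i\<close>] unfolding joined_outside_def by blast
  then obtain M where "M \<in> ?F" and M_max: "\<forall>X\<in>?F. M \<subseteq> X \<longrightarrow> M = X"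
    using finite_has_maximal2[of ?F X0] assms(1) by auto
  then have M: "M \<in> L" "i \<in> M" "\<not> E \<subseteq> M" by auto
  have "j \<in> M" if j: "j \<in> E" "j \<noteq> i" for j
  proof -
    obtain X where X: "X \<in> L" "i \<in> X" "j \<in> X" "\<not> E \<subseteq> X"
      using joined[OF j] unfolding joined_outside_def by blast
    have "X \<subseteq> M \<or> M \<subseteq> X"
      using assms(2) X(1,2) M(1,2) unfolding laminar_def by blast
    then show "j \<in> M" using M_max X by blast
  qed
  then have "E \<subseteq> M" using M(2) by blast
  with M(3) show False ..
qed

lemma two_laminar_unjoined_pair:
  assumes "finite L1" "laminar L1" "finite L2" "laminar L2" "2 \<le> card E"
  shows "\<exists>a\<in>E. \<exists>b\<in>E. a \<noteq> b \<and> \<not> joined_outside L1 E a b \<and> \<not> joined_outside L2 E a b"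
proof -
  have "E \<noteq> {}" using assms(5) by auto
  then obtain i where i: "i \<in> E" by blast
  obtain j where j: "j \<in> E" "j \<noteq> i" "\<not> joined_outside L1 E i j"
    using laminar_unjoined_partner[OF assms(1,2) i assms(5)] by blast
  obtain k where k: "k \<in> E" "k \<noteq> i" "\<not> joined_outside L2 E i k"
    using laminar_unjoined_partner[OF assms(3,4) i assms(5)] by blast
  consider "\<not> joined_outside L2 E i j" | "\<not> joined_outside L1 E i k"
    | "joined_outside L2 E i j" "joined_outside L1 E i k" by blast
  then show ?thesis
  proof cases
    case 1
    then show ?thesis using i j by metis
  next
    case 2
    then show ?thesis using i k by metis
  next
    case 3
    have "\<not> joined_outside L1 E j k"
    proof
      assume "joined_outside L1 E j k"
      then have "joined_outside L1 E i j"
        using laminar_joined_outside_trans[OF assms(2) 3(2) joined_outside_sym] by blast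
      with j(3) show False ..
    qed
    moreover have "\<not> joined_outside L2 E j k"
    proof
      assume "joined_outside L2 E j k"
      then have "joined_outside L2 E i k"
        using laminar_joined_outside_trans[OF assms(4) 3(1)] by blast
      with k(3) show False ..
    qed
    moreover have "j \<noteq> k" using 3(2) j(3) by blast
    ultimately show ?thesis using j(1) k(1) by blast
  qed
qed

section \<open>Clades of a rooted tree\<close>

lemma finite_leaves: "finite (leaves T)"
  by (induction T) auto

lemma finite_clades: "finite (clades T)"
  by (induction T) auto

lemma clade_subset_leaves: "X \<in> clades T \<Longrightarrow> X \<subseteq> leaves T"
  by (induction T arbitrary: X) fastforce+

lemma leaves_nonempty: "wf_tree T \<Longrightarrow> leaves T \<noteq> {}"
  by (induction T) (fastforce simp: neq_Nil_conv)+

lemma card_leaves_Node: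
  assumes wf: "wf_tree (Node ts)"
  shows "2 \<le> card (leaves (Node ts))"
proof -
  have len: "2 \<le> length ts" using wf by simp
  then have ts01: "ts ! 0 \<in> set ts" "ts ! 1 \<in> set ts" by (auto intro!: nth_mem)
  then have "leaves (ts ! 0) \<noteq> {}" "leaves (ts ! 1) \<noteq> {}"
    using wf leaves_nonempty by simp_all
  then obtain a b where a: "a \<in> leaves (ts ! 0)" and b: "b \<in> leaves (ts ! 1)" by blast
  have disjoint: "\<forall>i<length ts. \<forall>j<length ts. i \<noteq> j \<longrightarrow> leaves (ts ! i) \<inter> leaves (ts ! j) = {}"
    using wf by simp
  have "0 < length ts" "1 < length ts" using len by linarith+
  then have "leaves (ts ! 0) \<inter> leaves (ts ! 1) = {}"
    using disjoint[rule_format, OF _ _ zero_neq_one] by blast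
  then have "a \<noteq> b" using a b by blast
  have "{a, b} \<subseteq> leaves (Node ts)" using a b ts01 by auto
  then have "card {a, b} \<le> card (leaves (Node ts))"
    by (rule card_mono[OF finite_leaves])
  with \<open>a \<noteq> b\<close> show ?thesis by simp
qed

lemma card_clade: "wf_tree T \<Longrightarrow> X \<in> clades T \<Longrightarrow> 2 \<le> card X"
proof (induction T arbitrary: X)
  case (Node ts)
  then show ?case using card_leaves_Node[OF Node.prems(1)] by (auto simp del: leaves.simps)
qed simp

lemma leaves_in_clades: "wf_tree T \<Longrightarrow> 2 \<le> card (leaves T) \<Longrightarrow> leaves T \<in> clades T"
  by (cases T) auto

lemma laminar_clades:
  assumes "wf_tree T"
  shows "laminar (clades T)"
  using assms
proof (induction T)
  case (Leaf i)
  then show ?case by (simp add: laminar_def)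
next
  case (Node ts)
  have children: "X \<subseteq> Y \<or> Y \<subseteq> X \<or> X \<inter> Y = {}"
    if X: "X \<in> clades t" "t \<in> set ts" and Y: "Y \<in> clades t'" "t' \<in> set ts" for X Y t t'
  proof (cases "t = t'")
    case True
    then show ?thesis using Node X Y by (simp add: laminar_def)
  next
    case False
    obtain i j where "i < length ts" "j < length ts" "t = ts ! i" "t' = ts ! j"
      using X(2) Y(2) by (metis in_set_conv_nth)
    then have "leaves t \<inter> leaves t' = {}" using False Node.prems by auto
    then show ?thesis using clade_subset_leaves X(1) Y(1) by blast
  qed
  have root: "\<forall>X\<in>clades (Node ts). X \<subseteq> leaves (Node ts)"
    using clade_subset_leaves by blast
  show ?case
    unfolding laminar_def
  proof (intro ballI)
    fix X Y assume X: "X \<in> clades (Node ts)" and Y: "Y \<in> clades (Node ts)"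
    show "X \<subseteq> Y \<or> Y \<subseteq> X \<or> X \<inter> Y = {}"
    proof (cases "X = leaves (Node ts) \<or> Y = leaves (Node ts)")
      case True
      then show ?thesis using root X Y by blast
    next
      case False
      then obtain t t' where "X \<in> clades t" "t \<in> set ts" "Y \<in> clades t'" "t' \<in> set ts"
        using X Y by (auto simp del: leaves.simps)
      then show ?thesis by (rule children)
    qed
  qed
qed

section \<open>Moebius inversion on the clade intersection poset\<close>

lemma sum_Pow_minus_one_power:
  assumes "finite J"
  shows "(\<Sum>I\<in>Pow J. (-1::'a::ring_1) ^ card I) = (if J = {} then 1 else 0)"
proof (cases "J = {}")
  case False
  then have "{} \<subset> J" by blast
  then have "card {I \<in> Pow J. even (card I)} = card {I \<in> Pow J. odd (card I)}"
    using card_subsupersets_even_odd[OF assms \<open>{} \<subset> J\<close>] by (simp add: Pow_def)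
  then show ?thesis
    using sum_alternating_cancels[of "Pow J" card] assms False by simp
qed simp

lemma S_subset_cip: "S \<subseteq> cip S"
  by (auto simp: cip_def)

lemma Inter_in_cip: "F \<subseteq> S \<Longrightarrow> F \<noteq> {} \<Longrightarrow> 2 \<le> card (\<Inter>F) \<Longrightarrow> \<Inter>F \<in> cip S"
  unfolding cip_def by blast

lemma least_above_eqI:
  assumes "C \<in> P" "A \<subseteq> C" "\<And>C'. C' \<in> P \<Longrightarrow> A \<subseteq> C' \<Longrightarrow> C \<subseteq> C'"
  shows "least_above P A = C"
  unfolding least_above_def
proof (rule the_equality)
  show "C \<in> P \<and> A \<subseteq> C \<and> (\<forall>C'\<in>P. A \<subseteq> C' \<longrightarrow> C \<subseteq> C')" using assms by blast
  fix C' assume "C' \<in> P \<and> A \<subseteq> C' \<and> (\<forall>C''\<in>P. A \<subseteq> C'' \<longrightarrow> C' \<subseteq> C'')"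
  then show "C' = C" using assms by (meson subset_antisym)
qed

lemma parent_psubset: "D \<in> parents P C \<Longrightarrow> C \<subset> D"
  by (simp add: parents_def)

lemma parent_below:
  assumes "finite P" "X \<in> P" "C \<subset> X"
  shows "\<exists>D\<in>parents P C. D \<subseteq> X"
proof -
  let ?M = "{Y \<in> P. C \<subset> Y \<and> Y \<subseteq> X}"
  have "\<exists>D\<in>?M. \<forall>Y\<in>?M. Y \<le> D \<longrightarrow> D = Y"
    by (rule finite_has_minimal) (use assms in auto)
  then obtain D where D: "D \<in> ?M" and D_min: "\<forall>Y\<in>?M. Y \<subseteq> D \<longrightarrow> D = Y" ..
  have "\<not> (E \<in> P \<and> C \<subset> E \<and> E \<subset> D)" for E
  proof
    assume E: "E \<in> P \<and> C \<subset> E \<and> E \<subset> D"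
    then have "E \<in> ?M" using D by auto
    with E D_min show False by blast
  qed
  then have "D \<in> parents P C" using D unfolding parents_def by blast
  then show ?thesis using D by blast
qed

definition incl_excl_of :: "nat set set \<Rightarrow> (nat set \<Rightarrow> real) \<Rightarrow> nat set \<Rightarrow> real" where
  "incl_excl_of S f C = (\<Sum>I\<in>Pow (parents (cip S) C). (-1) ^ card I * f (D_of S C I))"

lemma incl_excl_eq_incl_excl_of: "incl_excl n S \<delta> = incl_excl_of S (delta_of n S \<delta>)"
  by (simp add: fun_eq_iff incl_excl_def incl_excl_of_def)

lemma incl_excl_of_minus_self_cong:
  assumes "finite (parents (cip S) C)"
    and "\<And>I. I \<subseteq> parents (cip S) C \<Longrightarrow> I \<noteq> {} \<Longrightarrow> f (D_of S C I) = g (D_of S C I)"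
  shows "incl_excl_of S f C - f C = incl_excl_of S g C - g C"
proof -
  have split: "incl_excl_of S h C = h C +
      (\<Sum>I\<in>Pow (parents (cip S) C) - {{}}. (-1) ^ card I * h (D_of S C I))" for h
    unfolding incl_excl_of_def using assms(1) by (simp add: sum.remove[of _ "{}"] D_of_def)
  show ?thesis
    unfolding split using assms(2) by (auto intro!: sum.cong)
qed

locale clade_system =
  fixes n :: nat and S :: "nat set set"
  assumes finite_S: "finite S"
    and top_in_S: "{1..n} \<in> S"
    and S_subset_top: "X \<in> S \<Longrightarrow> X \<subseteq> {1..n}"
    and card_S: "X \<in> S \<Longrightarrow> 2 \<le> card X"
begin

lemma cip_Inter:
  assumes "E \<in> cip S"
  shows "\<exists>F\<subseteq>S. F \<noteq> {} \<and> E = \<Inter>F"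
proof (cases "E \<in> S")
  case True
  then show ?thesis by (intro exI[of _ "{E}"]) simp
next
  case False
  then show ?thesis using assms unfolding cip_def by blast
qed

lemma cip_subset_top: "E \<in> cip S \<Longrightarrow> E \<subseteq> {1..n}"
  using cip_Inter S_subset_top by blast

lemma card_cip: "E \<in> cip S \<Longrightarrow> 2 \<le> card E"
  using card_S unfolding cip_def by auto

lemma S_top_subset_cip: "S - {{1..n}} \<subseteq> cip S"
  using S_subset_cip by blast

lemma top_in_cip: "{1..n} \<in> cip S"
  using top_in_S S_subset_cip by blast

lemma finite_cip: "finite (cip S)"
  by (rule finite_subset[of _ "Pow {1..n}"]) (use cip_subset_top in auto)

lemma finite_parents: "finite (parents (cip S) E)"
  by (rule finite_subset[OF _ finite_cip]) (auto simp: parents_def)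

lemma parents_nonempty:
  assumes "E \<in> cip S" "E \<noteq> {1..n}"
  shows "parents (cip S) E \<noteq> {}"
proof -
  have "E \<subset> {1..n}" using cip_subset_top[OF assms(1)] assms(2) by (rule psubsetI)
  from parent_below[OF finite_cip top_in_cip this] show ?thesis by blast
qed

lemma least_above_cip:
  assumes "A \<subseteq> {1..n}" "2 \<le> card A"
  shows "least_above (cip S) A = \<Inter>{X \<in> S. A \<subseteq> X}" (is "_ = ?C")
    and "least_above (cip S) A \<in> cip S"
    and "X \<in> cip S \<Longrightarrow> least_above (cip S) A \<subseteq> X \<longleftrightarrow> A \<subseteq> X"
proof -
  have top: "{1..n} \<in> {X \<in> S. A \<subseteq> X}" using top_in_S assms(1) by blast
  then have "card A \<le> card ?C"
    by (intro card_mono) (auto intro: finite_subset[of _ "{1..n}"])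
  then have C_cip: "?C \<in> cip S" using assms(2) top by (intro Inter_in_cip) auto
  have C_below: "?C \<subseteq> X" if "X \<in> cip S" "A \<subseteq> X" for X
    using cip_Inter[OF that(1)] that(2) by blast
  show eq: "least_above (cip S) A = ?C"
    by (rule least_above_eqI) (use C_cip C_below in auto)
  show "least_above (cip S) A \<in> cip S" using eq C_cip by simp
  show "least_above (cip S) A \<subseteq> X \<longleftrightarrow> A \<subseteq> X" if "X \<in> cip S"
    using eq C_below[OF that] by blast
qed

lemma
  assumes "E \<in> cip S" "I \<subseteq> parents (cip S) E"
  shows D_of_in_cip: "D_of S E I \<in> cip S"
    and D_of_subset_iff: "X \<in> cip S \<Longrightarrow> D_of S E I \<subseteq> X \<longleftrightarrow> E \<subseteq> X \<and> \<Union>I \<subseteq> X"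
proof -
  consider "I = {}" | D where "D \<in> I" by blast
  then have "D_of S E I \<in> cip S \<and> (\<forall>X\<in>cip S. D_of S E I \<subseteq> X \<longleftrightarrow> E \<subseteq> X \<and> \<Union>I \<subseteq> X)"
  proof cases
    case 1
    then show ?thesis using assms(1) by (simp add: D_of_def)
  next
    case (2 D)
    have parents: "\<And>D. D \<in> I \<Longrightarrow> D \<in> cip S \<and> E \<subseteq> D"
      using assms(2) by (auto simp: parents_def)
    have sub: "\<Union>I \<subseteq> {1..n}" using parents cip_subset_top by blast
    have "card D \<le> card (\<Union>I)"
      using 2 sub by (intro card_mono) (auto intro: finite_subset)
    then have card: "2 \<le> card (\<Union>I)" using card_cip parents[OF 2] by fastforce
    have "E \<subseteq> \<Union>I" using parents 2 by blast
    moreover have "D_of S E I = least_above (cip S) (\<Union>I)"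
      using 2 by (auto simp: D_of_def join_cip_def)
    ultimately show ?thesis using least_above_cip[OF sub card] by auto
  qed
  then show "D_of S E I \<in> cip S" "X \<in> cip S \<Longrightarrow> D_of S E I \<subseteq> X \<longleftrightarrow> E \<subseteq> X \<and> \<Union>I \<subseteq> X"
    by blast+
qed

lemma sum_D_of_subset_indicator:
  assumes E: "E \<in> cip S" and X: "X \<in> cip S"
  shows "(\<Sum>I\<in>Pow (parents (cip S) E). if D_of S E I \<subseteq> X then (-1::real) ^ card I else 0)
    = (if X = E then 1 else 0)"
proof (cases "E \<subseteq> X")
  case True
  let ?J = "{D \<in> parents (cip S) E. D \<subseteq> X}"
  have iff: "D_of S E I \<subseteq> X \<longleftrightarrow> I \<in> Pow ?J" if "I \<in> Pow (parents (cip S) E)" for I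
    using D_of_subset_iff[OF E _ X] True that by auto
  have "(\<Sum>I\<in>Pow (parents (cip S) E). if D_of S E I \<subseteq> X then (-1::real) ^ card I else 0)
      = (\<Sum>I\<in>Pow ?J. (-1) ^ card I)"
  proof (rule sum.mono_neutral_cong_right)
    fix I assume "I \<in> Pow ?J"
    then show "(if D_of S E I \<subseteq> X then (-1::real) ^ card I else 0) = (-1) ^ card I"
      using iff by auto
  qed (auto simp: finite_parents iff)
  also have "\<dots> = (if ?J = {} then 1 else 0)"
    by (rule sum_Pow_minus_one_power) (simp add: finite_parents)
  also have "?J = {} \<longleftrightarrow> X = E"
  proof
    assume "?J = {}"
    then show "X = E"
      using parent_below[OF finite_cip X, of E] True by blast
  next
    assume "X = E"
    then show "?J = {}" using parent_psubset by blast
  qed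
  finally show ?thesis .
next
  case False
  then have "\<not> D_of S E I \<subseteq> X" if "I \<subseteq> parents (cip S) E" for I
    using D_of_subset_iff[OF E that X] by blast
  then show ?thesis using False by auto
qed

lemma incl_excl_of_upper_sum:
  assumes E: "E \<in> cip S" "E \<noteq> {1..n}" and T: "T \<subseteq> cip S"
  shows "incl_excl_of S (\<lambda>Y. a + (\<Sum>X\<in>{X \<in> T. Y \<subseteq> X}. w X)) E = (if E \<in> T then w E else 0)"
proof -
  let ?P = "parents (cip S) E"
  let ?ind = "\<lambda>I X. if D_of S E I \<subseteq> X then (-1::real) ^ card I else 0"
  have finT: "finite T" using T finite_cip finite_subset by blast
  have "incl_excl_of S (\<lambda>Y. a + (\<Sum>X\<in>{X \<in> T. Y \<subseteq> X}. w X)) E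
      = (\<Sum>I\<in>Pow ?P. a * (-1) ^ card I + (\<Sum>X\<in>T. w X * ?ind I X))"
    unfolding incl_excl_of_def
  proof (rule sum.cong[OF refl])
    fix I
    have "(\<Sum>X\<in>{X \<in> T. D_of S E I \<subseteq> X}. w X) = (\<Sum>X\<in>T. if D_of S E I \<subseteq> X then w X else 0)"
      using finT by (rule sum.inter_filter)
    then show "(-1) ^ card I * (a + (\<Sum>X\<in>{X \<in> T. D_of S E I \<subseteq> X}. w X))
        = a * (-1) ^ card I + (\<Sum>X\<in>T. w X * ?ind I X)"
      by (simp add: distrib_left sum_distrib_left mult.commute if_distrib cong: if_cong)
  qed
  also have "\<dots> = a * (\<Sum>I\<in>Pow ?P. (-1) ^ card I) + (\<Sum>X\<in>T. w X * (\<Sum>I\<in>Pow ?P. ?ind I X))"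
    by (simp add: sum.distrib sum_distrib_left sum.swap[of _ "Pow ?P"])
  also have "\<dots> = (\<Sum>X\<in>T. if X = E then w X else 0)"
  proof -
    have "(\<Sum>I\<in>Pow ?P. (-1::real) ^ card I) = 0"
      using sum_Pow_minus_one_power[OF finite_parents[of E], where 'a=real] parents_nonempty[OF E]
      by simp
    moreover have "(\<Sum>X\<in>T. w X * (\<Sum>I\<in>Pow ?P. ?ind I X)) = (\<Sum>X\<in>T. if X = E then w X else 0)"
    proof (rule sum.cong[OF refl])
      fix X assume "X \<in> T"
      then have "X \<in> cip S" using T by blast
      then show "w X * (\<Sum>I\<in>Pow ?P. ?ind I X) = (if X = E then w X else 0)"
        by (simp add: sum_D_of_subset_indicator[OF E(1)])
    qed
    ultimately show ?thesis by simp
  qed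
  also have "\<dots> = (if E \<in> T then w E else 0)"
    using finT by (simp add: sum.delta')
  finally show ?thesis .
qed

lemma moebius_inversion:
  assumes "E \<in> cip S"
  shows "f E = f {1..n} + (\<Sum>X\<in>{X \<in> cip S - {{1..n}}. E \<subseteq> X}. incl_excl_of S f X)"
  using assms
proof (induction "card {1..n} - card E" arbitrary: E rule: less_induct)
  case less
  define \<Phi> where "\<Phi> = (\<lambda>Y. f {1..n} + (\<Sum>X\<in>{X \<in> cip S - {{1..n}}. Y \<subseteq> X}. incl_excl_of S f X))"
  show ?case
  proof (cases "E = {1..n}")
    case True
    then have "{X \<in> cip S - {{1..n}}. E \<subseteq> X} = {}" using cip_subset_top by blast
    then have "(\<Sum>X\<in>{X \<in> cip S - {{1..n}}. E \<subseteq> X}. incl_excl_of S f X) = 0"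
      by (simp only: sum.empty)
    then show ?thesis using True by simp
  next
    case False
    have IH: "f (D_of S E I) = \<Phi> (D_of S E I)" if I: "I \<subseteq> parents (cip S) E" "I \<noteq> {}" for I
    proof -
      have D: "D_of S E I \<in> cip S" using D_of_in_cip[OF less.prems I(1)] .
      obtain D' where "D' \<in> I" using I(2) by blast
      then have "E \<subset> D'" using I(1) parent_psubset by blast
      moreover have "D' \<subseteq> D_of S E I" using D_of_subset_iff[OF less.prems I(1) D] \<open>D' \<in> I\<close> by blast
      ultimately have "E \<subset> D_of S E I" by (rule psubset_subset_trans)
      then have "card E < card (D_of S E I)"
        using cip_subset_top[OF D] by (meson finite_atLeastAtMost finite_subset psubset_card_mono)
      moreover have "card (D_of S E I) \<le> card {1..n}" using cip_subset_top[OF D] by (intro card_mono) auto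
      ultimately show ?thesis using less.hyps[OF _ D] by (simp add: \<Phi>_def)
    qed
    have "incl_excl_of S \<Phi> E = incl_excl_of S f E"
      using incl_excl_of_upper_sum[OF less.prems False, of "cip S - {{1..n}}"] less.prems False
      by (simp add: \<Phi>_def)
    with incl_excl_of_minus_self_cong[of S E f \<Phi>, OF finite_parents IH] show ?thesis
      by (simp add: \<Phi>_def)
  qed
qed

end

section \<open>The cone of a pair of trees\<close>

definition K_vector :: "nat \<Rightarrow> nat set set \<Rightarrow> real \<Rightarrow> (nat set \<Rightarrow> real) \<Rightarrow> nat set \<Rightarrow> real" where
  "K_vector n S t c = (\<lambda>p. t * ones_vec n p + (\<Sum>C\<in>S - {{1..n}}. c C * - v_vec n C p))"

lemma K_cone_eq: "K_cone n S = {K_vector n S t c | t c. \<forall>C\<in>S - {{1..n}}. 0 \<le> c C}"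
  by (simp add: K_cone_def K_vector_def)

lemma K_vector_in_pair_space: "K_vector n S t c \<in> pair_space n"
  by (simp add: K_vector_def pair_space_def ones_vec_def v_vec_def)

context clade_system
begin

lemma
  assumes "p \<in> pairs n"
  shows pair_closure_in_cip: "pair_closure S p \<in> cip S"
    and pair_closure_subset_iff: "X \<in> cip S \<Longrightarrow> pair_closure S p \<subseteq> X \<longleftrightarrow> p \<subseteq> X"
  using least_above_cip(2,3)[of p] assms unfolding pair_closure_def pairs_def by auto

lemma K_vector_at_pair:
  assumes p: "p \<in> pairs n"
  shows "K_vector n S t c p = t - (\<Sum>X\<in>{X \<in> S - {{1..n}}. pair_closure S p \<subseteq> X}. c X)"
proof -
  have "(\<Sum>C\<in>S - {{1..n}}. c C * - v_vec n C p)
      = - (\<Sum>C\<in>S - {{1..n}}. if pair_closure S p \<subseteq> C then c C else 0)"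
    unfolding sum_negf[symmetric]
  proof (rule sum.cong[OF refl])
    fix C assume "C \<in> S - {{1..n}}"
    then have "C \<in> cip S" using S_subset_cip by blast
    then show "c C * - v_vec n C p = - (if pair_closure S p \<subseteq> C then c C else 0)"
      using pair_closure_subset_iff[OF p] p by (simp add: v_vec_def)
  qed
  also have "\<dots> = - (\<Sum>X\<in>{X \<in> S - {{1..n}}. pair_closure S p \<subseteq> X}. c X)"
    using sum.inter_filter[of "S - {{1..n}}" c "\<lambda>X. pair_closure S p \<subseteq> X"] finite_S by simp
  finally show ?thesis using p by (simp add: K_vector_def ones_vec_def)
qed

end

locale tree_pair = clade_system +
  fixes L1 L2 :: "nat set set"
  assumes S_eq: "S = L1 \<union> L2" and laminar_L1: "laminar L1" and laminar_L2: "laminar L2"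
begin

lemma pair_closure_surj:
  assumes E: "E \<in> cip S"
  shows "\<exists>p\<in>pairs n. pair_closure S p = E"
proof -
  have "finite L1" "finite L2" using finite_S S_eq by auto
  then obtain a b where ab: "a \<in> E" "b \<in> E" "a \<noteq> b"
    and unjoined: "\<not> joined_outside L1 E a b" "\<not> joined_outside L2 E a b"
    using two_laminar_unjoined_pair laminar_L1 laminar_L2 card_cip[OF E] by blast
  have sub: "{a, b} \<subseteq> {1..n}" using ab cip_subset_top[OF E] by blast
  have card: "card {a, b} = 2" using ab(3) by simp
  then have p: "{a, b} \<in> pairs n" using sub by (simp add: pairs_def)
  have "least_above (cip S) {a, b} \<subseteq> E"
    using least_above_cip(3)[OF sub _ E] card ab by simp
  moreover have "E \<subseteq> \<Inter>{X \<in> S. {a, b} \<subseteq> X}"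
    using unjoined S_eq unfolding joined_outside_def by blast
  ultimately have "pair_closure S {a, b} = E"
    using least_above_cip(1)[OF sub] card unfolding pair_closure_def by auto
  with p show ?thesis by blast
qed

lemma delta_of_pair_closure:
  assumes "E \<in> cip S"
  shows "\<exists>q\<in>pairs n. pair_closure S q = E \<and> delta_of n S \<delta> E = \<delta> q"
proof -
  have "\<exists>q. q \<in> pairs n \<and> pair_closure S q = E" using pair_closure_surj[OF assms] by blast
  then have "(SOME q. q \<in> pairs n \<and> pair_closure S q = E) \<in> pairs n \<and>
      pair_closure S (SOME q. q \<in> pairs n \<and> pair_closure S q = E) = E"
    by (rule someI_ex)
  then show ?thesis unfolding delta_of_def by blast
qed

lemma F_cone_at_pair:
  assumes \<delta>: "\<delta> \<in> F_cone n S" and p: "p \<in> pairs n"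
  shows "\<delta> p = delta_of n S \<delta> {1..n} +
    (\<Sum>X\<in>{X \<in> S - {{1..n}}. pair_closure S p \<subseteq> X}. incl_excl n S \<delta> X)"
proof -
  have const: "\<forall>p\<in>pairs n. \<forall>q\<in>pairs n. pair_closure S p = pair_closure S q \<longrightarrow> \<delta> p = \<delta> q"
    and eq: "\<forall>C\<in>cip S - S. incl_excl n S \<delta> C = 0"
    using \<delta> unfolding F_cone_def by blast+
  let ?E = "pair_closure S p"
  have E: "?E \<in> cip S" using pair_closure_in_cip[OF p] .
  obtain q where q: "q \<in> pairs n" "pair_closure S q = ?E" "delta_of n S \<delta> ?E = \<delta> q"
    using delta_of_pair_closure[OF E] by blast
  have "\<delta> q = \<delta> p" using const q(1,2) p by blast
  with q(3) have "\<delta> p = delta_of n S \<delta> ?E" by simp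
  also have "\<dots> = delta_of n S \<delta> {1..n} +
      (\<Sum>X\<in>{X \<in> cip S - {{1..n}}. ?E \<subseteq> X}. incl_excl n S \<delta> X)"
    using moebius_inversion[OF E] by (simp add: incl_excl_eq_incl_excl_of)
  also have "(\<Sum>X\<in>{X \<in> cip S - {{1..n}}. ?E \<subseteq> X}. incl_excl n S \<delta> X)
      = (\<Sum>X\<in>{X \<in> S - {{1..n}}. ?E \<subseteq> X}. incl_excl n S \<delta> X)"
    by (rule sum.mono_neutral_right) (use finite_cip S_subset_cip eq in auto)
  finally show ?thesis .
qed

lemma F_cone_subset_K_cone: "F_cone n S \<subseteq> K_cone n S"
proof
  fix \<delta> assume \<delta>: "\<delta> \<in> F_cone n S"
  define t where "t = delta_of n S \<delta> {1..n}"
  define c where "c C = - incl_excl n S \<delta> C" for C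
  have "\<delta> p = K_vector n S t c p" for p
  proof (cases "p \<in> pairs n")
    case True
    then show ?thesis
      using F_cone_at_pair[OF \<delta> True] K_vector_at_pair[OF True] by (simp add: t_def c_def sum_negf)
  next
    case False
    then show ?thesis using \<delta> by (simp add: F_cone_def pair_space_def K_vector_def ones_vec_def v_vec_def)
  qed
  moreover have "\<forall>C\<in>S - {{1..n}}. 0 \<le> c C" using \<delta> by (simp add: F_cone_def c_def)
  ultimately show "\<delta> \<in> K_cone n S" unfolding K_cone_eq by blast
qed

lemma incl_excl_K_vector:
  assumes E: "E \<in> cip S" "E \<noteq> {1..n}"
  shows "incl_excl n S (K_vector n S t c) E = (if E \<in> S - {{1..n}} then - c E else 0)"
proof -
  define h where "h = (\<lambda>E. t - (\<Sum>X\<in>{X \<in> S - {{1..n}}. E \<subseteq> X}. c X))"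
  have "delta_of n S (K_vector n S t c) D = h D" if "D \<in> cip S" for D
    using delta_of_pair_closure[OF that, where \<delta>="K_vector n S t c"] K_vector_at_pair
    by (force simp: h_def)
  then have "incl_excl n S (K_vector n S t c) E = incl_excl_of S h E"
    unfolding incl_excl_eq_incl_excl_of incl_excl_of_def
    using D_of_in_cip[OF E(1)] by (intro sum.cong) auto
  also have "\<dots> = (if E \<in> S - {{1..n}} then - c E else 0)"
    using incl_excl_of_upper_sum[OF E S_top_subset_cip, of t "\<lambda>X. - c X"]
    by (simp add: h_def sum_negf)
  finally show ?thesis .
qed

lemma K_cone_subset_F_cone: "K_cone n S \<subseteq> F_cone n S"
proof
  fix \<delta> assume "\<delta> \<in> K_cone n S"
  then obtain t c where \<delta>: "\<delta> = K_vector n S t c" and c: "\<forall>C\<in>S - {{1..n}}. 0 \<le> c C"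
    unfolding K_cone_eq by blast
  have "\<delta> \<in> pair_space n" using K_vector_in_pair_space by (simp add: \<delta>)
  moreover have "\<forall>p\<in>pairs n. \<forall>q\<in>pairs n. pair_closure S p = pair_closure S q \<longrightarrow> \<delta> p = \<delta> q"
    using K_vector_at_pair by (simp add: \<delta>)
  moreover have "\<forall>C\<in>S - {{1..n}}. incl_excl n S \<delta> C \<le> 0"
  proof
    fix C assume C: "C \<in> S - {{1..n}}"
    then have "C \<in> cip S" "C \<noteq> {1..n}" using S_top_subset_cip by blast+
    then show "incl_excl n S \<delta> C \<le> 0" using incl_excl_K_vector c C by (simp add: \<delta>)
  qed
  moreover have "\<forall>C\<in>cip S - S. incl_excl n S \<delta> C = 0"
  proof
    fix C assume C: "C \<in> cip S - S"
    then have "C \<in> cip S" "C \<noteq> {1..n}" using top_in_S by blast+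
    then show "incl_excl n S \<delta> C = 0" using incl_excl_K_vector C by (simp add: \<delta>)
  qed
  ultimately show "\<delta> \<in> F_cone n S" unfolding F_cone_def by blast
qed

theorem F_cone_eq_K_cone: "F_cone n S = K_cone n S"
  using F_cone_subset_K_cone K_cone_subset_F_cone by (rule subset_antisym)

end

lemma tree_pair_if_TP:
  assumes "S \<in> TP n" "2 \<le> n"
  obtains L1 L2 where "tree_pair n S L1 L2"
proof -
  obtain T1 T2 where S: "S = clades T1 \<union> clades T2"
    and T: "rooted_tree_on n T1" "rooted_tree_on n T2"
    using assms(1) unfolding TP_def by blast
  then have wf: "wf_tree T1" "wf_tree T2" and leaves: "leaves T1 = {1..n}" "leaves T2 = {1..n}"
    unfolding rooted_tree_on_def by auto
  have "tree_pair n S (clades T1) (clades T2)"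
  proof unfold_locales
    show "finite S" using S finite_clades by simp
    show "{1..n} \<in> S" using leaves_in_clades[OF wf(1)] leaves(1) assms(2) S by simp
    show "X \<subseteq> {1..n}" if "X \<in> S" for X using that S clade_subset_leaves leaves by blast
    show "2 \<le> card X" if "X \<in> S" for X using that S card_clade wf by blast
  qed (use S laminar_clades wf in auto)
  then show ?thesis by (rule that)
qed

lemma TP_eq_empty:
  assumes "S \<in> TP n" "n < 2"
  shows "S = {}"
proof -
  have False if T: "rooted_tree_on n T" and X: "X \<in> clades T" for T X
  proof -
    have "X \<subseteq> {1..n}" using clade_subset_leaves[OF X] T by (simp add: rooted_tree_on_def)
    then have "card X \<le> n" using card_mono[of "{1..n}" X] by simp
    moreover have "2 \<le> card X" using card_clade[OF _ X] T by (simp add: rooted_tree_on_def)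
    ultimately show False using assms(2) by simp
  qed
  then show ?thesis using assms(1) unfolding TP_def by blast
qed

lemma F_cone_eq_K_cone_empty:
  assumes "n < 2"
  shows "F_cone n {} = K_cone n {}"
proof -
  have "card p \<noteq> 2" if "p \<subseteq> {1..n}" for p :: "nat set"
    using card_mono[OF _ that] assms by simp
  then have "pairs n = {}" unfolding pairs_def by blast
  then have "F_cone n {} = {\<lambda>_. 0}" and "K_cone n {} = {\<lambda>_. 0}"
    by (auto simp: F_cone_def pair_space_def cip_def K_cone_def ones_vec_def)
  then show ?thesis by simp
qed

theorem proposition3p12:
  fixes n :: nat and S :: "nat set set"
  assumes "S \<in> TP n"
  shows "F_cone n S = K_cone n S"
proof (cases "n < 2")
  case True
  then show ?thesis using TP_eq_empty[OF assms] F_cone_eq_K_cone_empty by simp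
next
  case False
  then obtain L1 L2 where "tree_pair n S L1 L2"
    using tree_pair_if_TP[OF assms] by (meson not_less)
  then show ?thesis by (rule tree_pair.F_cone_eq_K_cone)
qed

end
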